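(* Let $k\ge1$, $n\ge2$, $m=kn-1$, and let $\varphi\in C^\infty(\mathbb P_m\mathbb C)$ be $g$-admissible and $G_{n,k}$-invariant. Then for all real $0<x_i\le1$ ($1\le i\le m$), $$(\varphi-\psi)([1,x_1,\dots,x_m])\ge(\varphi-\psi)([1,\zeta_0^{[n-1]},\zeta_1^{[n]},\dots,\zeta_{k-1}^{[n]}]),$$ where $\zeta^{[d]}=(\zeta,\dots,\zeta)\in\mathbb C^d$, $\zeta_0=(x_1\cdots x_{n-1})^{1/(n-1)}$ and $\zeta_h=(x_{hn}\cdots x_{(h+1)n-1})^{1/n}$ for $1\le h\le k-1$.
   Context: Homogeneous coordinates on $\mathbb P_m\mathbb C$, $m=kn-1$, are written $[z_0,\dots,z_m]=[Z_0,\dots,Z_{k-1}]$ with blocks $Z_h=(z_{hn},\dots,z_{(h+1)n-1})$. The metric $g$ has components $g_{\lambda\bar\mu}=a_m\,\partial^2\ln(1+|z_1|^2+\cdots+|z_m|^2)/\partial z_\lambda\partial\bar z_\mu$ in the chart $\{z_0=1\}$, for a fixed $a_m>0$. $\varphi$ is $g$-admissible if $g_{\lambda\bar\mu}+\partial^2\varphi/\partial z_\lambda\partial\bar z_\mu$ is positive definite everywhere. $G_{n,k}$ is the automorphism group generated by swaps of two blocks $Z_i,Z_j$, multiplication of a single coordinate $z_p$ by $e^{i\theta}$, and transpositions of two coordinates in the same block. $\psi([z_0,\dots,z_m])=\ln\big((|z_0|\cdots|z_m|)^{2a_m/(m+1)}/(|z_0|^2+\cdots+|z_m|^2)^{a_m}\big)$,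 defined where all $z_p\ne0$. *)

theory Defs
  imports "HOL-Analysis.Analysis"
begin

(* Points of C^{m+1} are represented as  z :: nat => complex  (only indices 0..m matter). *)

definition proj_fun :: "nat \<Rightarrow> ((nat \<Rightarrow> complex) \<Rightarrow> real) \<Rightarrow> bool" where
  "proj_fun m \<phi> \<longleftrightarrow>
     (\<forall>z z'. (\<forall>i\<le>m. z i = z' i) \<longrightarrow> \<phi> z = \<phi> z') \<and>
     (\<forall>z c. c \<noteq> 0 \<longrightarrow> \<phi> (\<lambda>i. c * z i) = \<phi> z)"

definition chart_idx :: "nat \<Rightarrow> nat \<Rightarrow> nat set" where
  "chart_idx m j = {0..m} - {j}"

definition chart :: "nat \<Rightarrow> nat \<Rightarrow> (nat \<Rightarrow> complex) \<Rightarrow> (nat \<Rightarrow> complex)" where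
  "chart m j w = (\<lambda>i. if i = j then 1 else if i \<le> m then w i else 0)"

definition coord_space :: "nat set \<Rightarrow> (nat \<Rightarrow> complex) set" where
  "coord_space I = {w. \<forall>i. i \<notin> I \<longrightarrow> w i = 0}"

definition dir_line :: "nat \<Rightarrow> bool \<Rightarrow> (nat \<Rightarrow> complex) \<Rightarrow> real \<Rightarrow> (nat \<Rightarrow> complex)" where
  "dir_line i b w t = w(i := w i + (if b then \<i> else 1) * complex_of_real t)"

definition dpart :: "nat \<Rightarrow> bool \<Rightarrow> ((nat \<Rightarrow> complex) \<Rightarrow> real) \<Rightarrow> (nat \<Rightarrow> complex) \<Rightarrow> real" where
  "dpart i b f w = deriv (\<lambda>t. f (dir_line i b w t)) 0"

fun iter_dpart :: "(nat \<times> bool) list \<Rightarrow> ((nat \<Rightarrow> complex) \<Rightarrow> real) \<Rightarrow> (nat \<Rightarrow> complex) \<Rightarrow> real" where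
  "iter_dpart [] f = f"
| "iter_dpart ((i,b) # ds) f = dpart i b (iter_dpart ds f)"

definition smooth_coords :: "nat set \<Rightarrow> ((nat \<Rightarrow> complex) \<Rightarrow> real) \<Rightarrow> bool" where
  "smooth_coords I f \<longleftrightarrow>
     (\<forall>ds. set (map fst ds) \<subseteq> I \<longrightarrow>
        continuous_on (coord_space I) (iter_dpart ds f) \<and>
        (\<forall>i\<in>I. \<forall>b. \<forall>w\<in>coord_space I.
            (\<lambda>t. iter_dpart ds f (dir_line i b w t)) differentiable (at 0)))"

definition smooth_Pm :: "nat \<Rightarrow> ((nat \<Rightarrow> complex) \<Rightarrow> real) \<Rightarrow> bool" where
  "smooth_Pm m \<phi> \<longleftrightarrow> (\<forall>j\<le>m. smooth_coords (chart_idx m j) (\<lambda>w. \<phi> (chart m j w)))"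

(* complex Hessian  d^2 f / dz_l d(conj z_u) = 1/4 (dx_l dx_u + dy_l dy_u + i (dx_l dy_u - dy_l dx_u)) *)
definition cplx_hess :: "((nat \<Rightarrow> complex) \<Rightarrow> real) \<Rightarrow> (nat \<Rightarrow> complex) \<Rightarrow> nat \<Rightarrow> nat \<Rightarrow> complex" where
  "cplx_hess f w l u =
     (complex_of_real (iter_dpart [(l,False),(u,False)] f w + iter_dpart [(l,True),(u,True)] f w)
      + \<i> * complex_of_real (iter_dpart [(l,False),(u,True)] f w - iter_dpart [(l,True),(u,False)] f w)) / 4"

definition pos_def_herm :: "nat set \<Rightarrow> (nat \<Rightarrow> nat \<Rightarrow> complex) \<Rightarrow> bool" where
  "pos_def_herm I M \<longleftrightarrow>
     (\<forall>l\<in>I. \<forall>u\<in>I. M u l = cnj (M l u)) \<and>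
     (\<forall>v. (\<exists>i\<in>I. v i \<noteq> 0) \<longrightarrow> 0 < Re (\<Sum>l\<in>I. \<Sum>u\<in>I. M l u * v l * cnj (v u)))"

(* Kaehler potential of g in chart j: a * ln (1 + sum |w_i|^2) *)
definition fs_pot :: "nat set \<Rightarrow> (nat \<Rightarrow> complex) \<Rightarrow> real" where
  "fs_pot I w = ln (1 + (\<Sum>i\<in>I. (cmod (w i))\<^sup>2))"

definition g_admissible :: "real \<Rightarrow> nat \<Rightarrow> ((nat \<Rightarrow> complex) \<Rightarrow> real) \<Rightarrow> bool" where
  "g_admissible a m \<phi> \<longleftrightarrow>
     (\<forall>j\<le>m. \<forall>w\<in>coord_space (chart_idx m j).
        pos_def_herm (chart_idx m j)
          (\<lambda>l u. complex_of_real a * cplx_hess (fs_pot (chart_idx m j)) w l u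
                 + cplx_hess (\<lambda>w'. \<phi> (chart m j w')) w l u))"

(* generators of G_{n,k} acting on homogeneous coordinates *)
definition block_swap :: "nat \<Rightarrow> nat \<Rightarrow> nat \<Rightarrow> nat \<Rightarrow> nat" where
  "block_swap n i j p =
     (if p div n = i then j * n + p mod n else if p div n = j then i * n + p mod n else p)"

definition G_invariant :: "nat \<Rightarrow> nat \<Rightarrow> ((nat \<Rightarrow> complex) \<Rightarrow> real) \<Rightarrow> bool" where
  "G_invariant n k \<phi> \<longleftrightarrow>
     (\<forall>i<k. \<forall>j<k. \<forall>z. \<phi> (z \<circ> block_swap n i j) = \<phi> z) \<and>
     (\<forall>p<k*n. \<forall>\<theta>::real. \<forall>z. \<phi> (z(p := cis \<theta> * z p)) = \<phi> z) \<and>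
     (\<forall>p<k*n. \<forall>q<k*n. p div n = q div n \<longrightarrow>
        (\<forall>z. \<phi> (z \<circ> Fun.swap p q id) = \<phi> z))"

definition psi :: "real \<Rightarrow> nat \<Rightarrow> (nat \<Rightarrow> complex) \<Rightarrow> real" where
  "psi a m z = ln (((\<Prod>p\<le>m. cmod (z p)) powr (2 * a / real (m + 1)))
                   / ((\<Sum>p\<le>m. (cmod (z p))\<^sup>2) powr a))"

end

theory Submission
  imports Defs
begin

text \<open>Work in the chart \<open>z\<^sub>0 = 1\<close> at positive real points \<open>x\<^sub>i = exp t\<^sub>i\<close>. There
  \<open>\<phi> - \<psi> = F - (2a/(m+1)) \<Sum> t\<^sub>i\<close> with \<open>F = \<phi> + a ln (1 + \<Sum> |z\<^sub>i|\<^sup>2)\<close>. The phase rotations in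
  \<open>G(n,k)\<close> make \<open>F\<close> toric, and for a toric function the positivity required by admissibility
  becomes convexity of \<open>F\<close> in \<open>t\<close>. Replacing every block of coordinates by its geometric
  mean \<open>y\<close> keeps \<open>\<Sum> t\<^sub>i\<close>, and by convexity
  \<open>F x \<ge> F y + \<Sum> (\<partial>F/\<partial>t\<^sub>i)(y) (ln x\<^sub>i - ln y\<^sub>i)\<close>. The transpositions inside a block make
  \<open>\<partial>F/\<partial>t\<^sub>i\<close> constant on each block at \<open>y\<close>, while \<open>ln x\<^sub>i - ln y\<^sub>i\<close> sums to zero over
  each block, so the linear term vanishes and \<open>F x \<ge> F y\<close>.\<close>

section \<open>A chain rule along coordinate curves\<close>

definition coord_curve ::
    "nat set \<Rightarrow> (nat \<Rightarrow> complex) \<Rightarrow> (nat \<Rightarrow> real \<Rightarrow> real) \<Rightarrow> real \<Rightarrow> nat \<Rightarrow> complex" where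
  "coord_curve J q \<rho> s = (\<lambda>i. if i \<in> J then complex_of_real (\<rho> i s) else q i)"

lemma fun_upd_in_coord_space: "p \<in> coord_space I \<Longrightarrow> l \<in> I \<Longrightarrow> p(l := c) \<in> coord_space I"
  by (auto simp: coord_space_def)

lemma coord_curve_in_coord_space: "q \<in> coord_space I \<Longrightarrow> J \<subseteq> I \<Longrightarrow> coord_curve J q \<rho> s \<in> coord_space I"
  by (auto simp: coord_space_def coord_curve_def)

lemma continuous_on_coord_curve:
  assumes "\<And>l. continuous_on UNIV (\<rho> l)"
  shows "continuous_on UNIV (\<lambda>(x::real, s). coord_curve J (q(j := complex_of_real x)) \<rho> s)"
proof (rule continuous_on_coordinatewise_then_product)
  fix i
  have "continuous_on UNIV (\<lambda>xs::real \<times> real. complex_of_real (\<rho> i (snd xs)))"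
    by (intro continuous_intros continuous_on_compose2[OF assms[of i]]) auto
  moreover have "continuous_on UNIV (\<lambda>xs::real \<times> real. complex_of_real (fst xs))"
    by (intro continuous_intros)
  ultimately show "continuous_on UNIV (\<lambda>xs. (case xs of (x, s) \<Rightarrow> coord_curve J (q(j := complex_of_real x)) \<rho> s) i)"
    by (cases "i \<in> J"; cases "i = j") (auto simp: coord_curve_def case_prod_beta)
qed

lemma has_real_derivative_partials_diagonal:
  fixes F Ds :: "real \<Rightarrow> real \<Rightarrow> real"
  assumes F_x: "((\<lambda>x. F x s) has_real_derivative Dx) (at (\<rho> s))"
    and F_s: "\<And>x s. ((\<lambda>s. F x s) has_real_derivative Ds x s) (at s)"
    and Ds_cont: "continuous_on UNIV (\<lambda>(x, s). Ds x s)"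
    and \<rho>: "(\<rho> has_real_derivative \<rho>') (at s)"
  shows "((\<lambda>s. F (\<rho> s) s) has_real_derivative Dx * \<rho>' + Ds (\<rho> s) s) (at s)"
proof -
  have "continuous (at (\<rho> s, s)) (\<lambda>xs. blinfun_mult_right ((\<lambda>(x, s). Ds x s) xs))"
    using Ds_cont by (intro bounded_linear.continuous[OF bounded_linear_blinfun_mult_right])
      (simp add: continuous_on_eq_continuous_at)
  then have cont: "continuous (at (\<rho> s, s) within UNIV \<times> UNIV) (\<lambda>(x, s). blinfun_mult_right (Ds x s))"
    by (simp add: split_beta')
  have d_x: "((\<lambda>x. F x s) has_derivative (\<lambda>h. h * Dx)) (at (\<rho> s))"
    using F_x unfolding has_field_derivative_def by (simp add: mult.commute[of _ Dx])
  have d_s: "((\<lambda>s. F x s) has_derivative blinfun_mult_right (Ds x s)) (at s)" for x s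
    using F_s unfolding has_field_derivative_def by (simp add: blinfun_mult_right.rep_eq)
  have "((\<lambda>(x, s). F x s) has_derivative (\<lambda>(hx, hs). hx * Dx + Ds (\<rho> s) s * hs)) (at (\<rho> s, s))"
    using has_derivative_partialsI[OF d_x d_s cont] by (auto simp: blinfun_mult_right.rep_eq)
  moreover have "((\<lambda>s. (\<rho> s, s)) has_derivative (\<lambda>h. (\<rho>' * h, h))) (at s)"
    using \<rho> unfolding has_field_derivative_def by (auto intro!: derivative_eq_intros)
  ultimately have "((\<lambda>s. F (\<rho> s) s) has_derivative (\<lambda>h. (Dx * \<rho>' + Ds (\<rho> s) s) * h)) (at s)"
    using diff_chain_at by (fastforce simp: o_def algebra_simps)
  then show ?thesis by (simp add: has_field_derivative_def)
qed

lemma has_real_derivative_coord_curve: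
  fixes g :: "(nat \<Rightarrow> complex) \<Rightarrow> real" and D :: "nat \<Rightarrow> (nat \<Rightarrow> complex) \<Rightarrow> real"
  assumes "finite J" "J \<subseteq> I"
    and D: "\<And>l p. l \<in> I \<Longrightarrow> p \<in> coord_space I \<Longrightarrow>
              ((\<lambda>t. g (p(l := p l + complex_of_real t))) has_real_derivative D l p) (at 0)"
    and D_cont: "\<And>l. l \<in> I \<Longrightarrow> continuous_on (coord_space I) (D l)"
    and \<rho>: "\<And>l s. (\<rho> l has_real_derivative \<rho>' l s) (at s)"
    and \<rho>'_cont: "\<And>l. continuous_on UNIV (\<rho>' l)"
    and q: "q \<in> coord_space I"
  shows "((\<lambda>s. g (coord_curve J q \<rho> s)) has_real_derivative
            (\<Sum>l\<in>J. D l (coord_curve J q \<rho> s) * \<rho>' l s)) (at s)"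
  using assms(1,2) q
proof (induction J arbitrary: q s rule: finite_induct)
  case empty
  then show ?case by (simp add: coord_curve_def)
next
  case (insert j J)
  have jI: "j \<in> I" and JI: "J \<subseteq> I" using insert.prems by auto
  have \<rho>_cont: "continuous_on UNIV (\<rho> l)" for l
    using \<rho> by (meson DERIV_continuous continuous_at_imp_continuous_on)
  define F where "F x s = g (coord_curve J (q(j := complex_of_real x)) \<rho> s)" for x s
  define c where "c x s = (\<Sum>l\<in>J. D l (coord_curve J (q(j := complex_of_real x)) \<rho> s) * \<rho>' l s)" for x s
  have q_upd: "q(j := complex_of_real x) \<in> coord_space I" for x
    using insert.prems jI by (simp add: fun_upd_in_coord_space)
  have curve_in: "coord_curve J (q(j := complex_of_real x)) \<rho> s \<in> coord_space I" for x s
    using coord_curve_in_coord_space[OF q_upd JI] .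
  have "((\<lambda>x. F x s) has_real_derivative D j (coord_curve (insert j J) q \<rho> s)) (at (\<rho> j s))"
  proof -
    let ?p = "coord_curve J (q(j := complex_of_real (\<rho> j s))) \<rho> s"
    have "(\<lambda>t. F (t + \<rho> j s) s) = (\<lambda>t. g (?p(j := ?p j + complex_of_real t)))"
      using insert.hyps(2) unfolding F_def
      by (intro ext arg_cong[where f=g]) (auto simp: coord_curve_def add.commute)
    moreover have "?p = coord_curve (insert j J) q \<rho> s"
      using insert.hyps(2) by (auto simp: coord_curve_def)
    ultimately have "((\<lambda>t. F (t + \<rho> j s) s) has_real_derivative D j (coord_curve (insert j J) q \<rho> s)) (at 0)"
      using D[OF jI curve_in] by metis
    then show ?thesis using DERIV_shift[where f = "\<lambda>x. F x s" and x = 0] by simp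
  qed
  moreover have "((\<lambda>s. F x s) has_real_derivative c x s) (at s)" for x s
    using insert.IH[OF JI q_upd] unfolding F_def c_def .
  moreover have "continuous_on UNIV (\<lambda>(x, s). c x s)"
  proof -
    have "continuous_on UNIV (\<lambda>xs::real \<times> real. D l (coord_curve J (q(j := complex_of_real (fst xs))) \<rho> (snd xs)))"
      if "l \<in> J" for l
      using continuous_on_coord_curve[of \<rho> J q j, OF \<rho>_cont] that JI curve_in
      by (intro continuous_on_compose2[OF D_cont]) (auto simp: case_prod_beta)
    moreover have "continuous_on UNIV (\<lambda>xs::real \<times> real. \<rho>' l (snd xs))" for l
      by (intro continuous_on_compose2[OF \<rho>'_cont] continuous_intros) auto
    ultimately show ?thesis
      unfolding c_def case_prod_beta by (intro continuous_intros) auto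
  qed
  ultimately have "((\<lambda>s. F (\<rho> j s) s) has_real_derivative
      D j (coord_curve (insert j J) q \<rho> s) * \<rho>' j s + c (\<rho> j s) s) (at s)"
    using has_real_derivative_partials_diagonal \<rho> by blast
  moreover have "coord_curve (insert j J) q \<rho> s' = coord_curve J (q(j := complex_of_real (\<rho> j s'))) \<rho> s'" for s'
    using insert.hyps(2) by (auto simp: coord_curve_def fun_eq_iff)
  ultimately show ?case
    using insert.hyps unfolding F_def c_def by (simp add: algebra_simps)
qed

lemma smooth_coords_has_real_derivative:
  assumes "smooth_coords I f" "set (map fst ds) \<subseteq> I" "i \<in> I" "w \<in> coord_space I"
  shows "((\<lambda>t. iter_dpart ds f (dir_line i b w t)) has_real_derivative
            dpart i b (iter_dpart ds f) w) (at 0)"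
proof -
  have "(\<lambda>t. iter_dpart ds f (dir_line i b w t)) differentiable (at 0)"
    using assms unfolding smooth_coords_def by blast
  then show ?thesis unfolding dpart_def using DERIV_deriv_iff_real_differentiable by blast
qed

lemma smooth_coords_continuous_on:
  "smooth_coords I f \<Longrightarrow> set (map fst ds) \<subseteq> I \<Longrightarrow> continuous_on (coord_space I) (iter_dpart ds f)"
  unfolding smooth_coords_def by blast

section \<open>Toric functions\<close>

definition toric_on :: "nat set \<Rightarrow> ((nat \<Rightarrow> complex) \<Rightarrow> real) \<Rightarrow> bool" where
  "toric_on I f \<longleftrightarrow> (\<forall>u\<in>I. \<forall>z \<zeta> \<zeta>'. cmod \<zeta> = cmod \<zeta>' \<longrightarrow> f (z(u := \<zeta>)) = f (z(u := \<zeta>')))"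

lemma toric_onD:
  "toric_on I f \<Longrightarrow> u \<in> I \<Longrightarrow> cmod \<zeta> = cmod \<zeta>' \<Longrightarrow> f (z(u := \<zeta>)) = f (z(u := \<zeta>'))"
  unfolding toric_on_def by blast

lemma cmod_eq_imp_cis_mult:
  assumes "cmod z = cmod z'"
  obtains \<theta> where "z' = cis \<theta> * z"
proof (cases "z = 0")
  case True
  then show ?thesis using assms that[of 0] by simp
next
  case False
  have "z' \<noteq> 0" using assms False by (metis norm_eq_zero)
  moreover have "cmod (z' / z) = 1" using assms False by (simp add: norm_divide flip: assms)
  ultimately have "cis (Arg (z' / z)) = z' / z" using False by (simp add: cis_Arg sgn_div_norm)
  then show ?thesis using False that[of "Arg (z' / z)"] by simp
qed

lemma toric_dpart_Im_eq_0:
  assumes "toric_on I f" "smooth_coords I f" "u \<in> I" "p \<in> coord_space I" "Im (p u) = 0"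
  shows "dpart u True f p = 0"
proof -
  let ?e = "\<lambda>t. f (dir_line u True p t)"
  have d: "(?e has_real_derivative dpart u True f p) (at 0)"
    using smooth_coords_has_real_derivative[of I f "[]"] assms by simp
  have even: "?e (- t) = ?e t" for t
  proof -
    have "cmod (p u + \<i> * complex_of_real (- t)) = cmod (p u + \<i> * complex_of_real t)"
      using assms(5) by (simp add: cmod_def)
    from toric_onD[OF assms(1,3) this] show ?thesis
      unfolding dir_line_def by simp
  qed
  have "((\<lambda>t. ?e (- t)) has_real_derivative - dpart u True f p) (at 0)"
    using d DERIV_mirror[where f = ?e and x = 0] by simp
  with d have "dpart u True f p = - dpart u True f p"
    unfolding even by (rule DERIV_unique)
  then show ?thesis by simp
qed

lemma toric_dpart_Im_Im_offdiag:
  assumes "toric_on I f" "smooth_coords I f" "l \<in> I" "u \<in> I" "l \<noteq> u"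
    and "p \<in> coord_space I" "Im (p u) = 0"
  shows "iter_dpart [(l,True),(u,True)] f p = 0"
proof -
  have "dpart u True f (dir_line l True p t) = 0" for t
    using toric_dpart_Im_eq_0[OF assms(1,2,4)] assms(3,5-7)
    by (simp add: dir_line_def fun_upd_in_coord_space)
  then show ?thesis by (simp add: dpart_def)
qed

lemma has_real_derivative_radial:
  fixes E E' :: "real \<Rightarrow> real"
  assumes E: "\<And>r. (E has_real_derivative E' r) (at r)" and E': "(E' has_real_derivative E'') (at x)"
    and x: "x > 0"
  shows "((\<lambda>t. E (sqrt (x\<^sup>2 + t\<^sup>2))) has_real_derivative
            E' (sqrt (x\<^sup>2 + t\<^sup>2)) * (t / sqrt (x\<^sup>2 + t\<^sup>2))) (at t)"
    and "((\<lambda>t. E' (sqrt (x\<^sup>2 + t\<^sup>2)) * (t / sqrt (x\<^sup>2 + t\<^sup>2))) has_real_derivative E' x / x) (at 0)"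
proof -
  define \<rho> where "\<rho> t = sqrt (x\<^sup>2 + t\<^sup>2)" for t
  have \<rho>_pos: "\<rho> t > 0" for t using x by (simp add: \<rho>_def add_pos_nonneg)
  have \<rho>_0: "\<rho> 0 = x" using x by (simp add: \<rho>_def)
  have \<rho>: "(\<rho> has_real_derivative t / \<rho> t) (at t)" for t
    using \<rho>_pos[of t] unfolding \<rho>_def by (auto intro!: derivative_eq_intros simp: field_simps)
  show "((\<lambda>t. E (sqrt (x\<^sup>2 + t\<^sup>2))) has_real_derivative
            E' (sqrt (x\<^sup>2 + t\<^sup>2)) * (t / sqrt (x\<^sup>2 + t\<^sup>2))) (at t)"
    using DERIV_chain2[OF E \<rho>] unfolding \<rho>_def .
  have "((\<lambda>t. E' (\<rho> t) * (t / \<rho> t)) has_real_derivative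
          E'' * (0 / \<rho> 0) * (0 / \<rho> 0) + (1 * \<rho> 0 - 0 * (0 / \<rho> 0)) / (\<rho> 0 * \<rho> 0) * E' (\<rho> 0)) (at 0)"
    using E'[folded \<rho>_0] \<rho>_pos[of 0]
    by (intro DERIV_mult DERIV_chain2[OF _ \<rho>] DERIV_divide[OF DERIV_ident \<rho>]) auto
  then show "((\<lambda>t. E' (sqrt (x\<^sup>2 + t\<^sup>2)) * (t / sqrt (x\<^sup>2 + t\<^sup>2))) has_real_derivative E' x / x) (at 0)"
    using \<rho>_0 x unfolding \<rho>_def by simp
qed

text \<open>On the imaginary line through \<open>x > 0\<close> a toric function equals \<open>E (sqrt (x\<^sup>2 + t\<^sup>2))\<close>,
  where \<open>E\<close> is its restriction to the real line.\<close>

lemma toric_dpart_Im_Im_diag: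
  assumes toric: "toric_on I f" and smooth: "smooth_coords I f" and l: "l \<in> I"
    and p: "p \<in> coord_space I" and px: "p l = complex_of_real x" and x: "x > 0"
  shows "iter_dpart [(l,True),(l,True)] f p = dpart l False f p / x"
proof -
  define E where "E r = f (p(l := complex_of_real r))" for r
  define E' where "E' r = dpart l False f (p(l := complex_of_real r))" for r
  have E: "(E has_real_derivative E' r) (at r)" for r
  proof -
    have "((\<lambda>t. f (dir_line l False (p(l := complex_of_real r)) t)) has_real_derivative E' r) (at 0)"
      using smooth_coords_has_real_derivative[OF smooth, of "[]" l "p(l := complex_of_real r)"] l p
      by (simp add: E'_def fun_upd_in_coord_space)
    moreover have "(\<lambda>t. f (dir_line l False (p(l := complex_of_real r)) t)) = (\<lambda>t. E (t + r))"
      by (simp add: dir_line_def E_def add.commute)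
    ultimately show ?thesis using DERIV_shift[of E "E' r" 0 r] by simp
  qed
  obtain E'' where E': "(E' has_real_derivative E'') (at x)"
  proof -
    have "(\<lambda>t. dpart l False f (dir_line l False p t)) = (\<lambda>t. E' (t + x))"
      by (simp add: dir_line_def E'_def px add.commute)
    then have "((\<lambda>t. E' (t + x)) has_real_derivative dpart l False (dpart l False f) p) (at 0)"
      using smooth_coords_has_real_derivative[OF smooth, of "[(l,False)]" l p False] l p by simp
    then show ?thesis using DERIV_shift[of E' _ 0 x] that by auto
  qed
  have "f (dir_line l True (dir_line l True p t) s) = E (sqrt (x\<^sup>2 + (t + s)\<^sup>2))" for t s
  proof -
    have "cmod (complex_of_real x + \<i> * complex_of_real t + \<i> * complex_of_real s)
          = cmod (complex_of_real (sqrt (x\<^sup>2 + (t + s)\<^sup>2)))"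
      by (simp add: cmod_def algebra_simps)
    from toric_onD[OF toric l this] show ?thesis
      unfolding E_def dir_line_def using px by simp
  qed
  then have "dpart l True f (dir_line l True p t) = E' (sqrt (x\<^sup>2 + t\<^sup>2)) * (t / sqrt (x\<^sup>2 + t\<^sup>2))" for t
    using DERIV_shift[where f = "\<lambda>t. E (sqrt (x\<^sup>2 + t\<^sup>2))" and x = 0 and z = t]
      has_real_derivative_radial(1)[OF E E' x, of t]
    unfolding dpart_def by (simp add: add.commute DERIV_imp_deriv)
  then have "((\<lambda>t. dpart l True f (dir_line l True p t)) has_real_derivative E' x / x) (at 0)"
    using has_real_derivative_radial(2)[OF E E' x] by simp
  moreover have "E' x = dpart l False f p" unfolding E'_def using px[symmetric] by simp
  ultimately show ?thesis by (simp add: dpart_def DERIV_imp_deriv)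
qed

lemma toric_dpart_Im_Im:
  assumes "toric_on I f" "smooth_coords I f" "l \<in> I" "u \<in> I" "w \<in> coord_space I"
    and "\<And>i. i \<in> I \<Longrightarrow> w i = complex_of_real (r i)" "\<And>i. i \<in> I \<Longrightarrow> r i > 0"
  shows "iter_dpart [(l,True),(u,True)] f w = (if l = u then dpart l False f w / r l else 0)"
  using toric_dpart_Im_Im_diag[OF assms(1,2,3,5)] toric_dpart_Im_Im_offdiag[OF assms(1-4) _ assms(5)]
    assms(3,4,6,7) by force

section \<open>The Fubini-Study potential and complex Hessians at real points\<close>

definition coord_part :: "bool \<Rightarrow> complex \<Rightarrow> real" where
  "coord_part b z = (if b then Im z else Re z)"

lemma sum_cmod_sq_dir_line:
  assumes "finite I" "l \<in> I"
  shows "(\<Sum>i\<in>I. (cmod (dir_line l b p t i))\<^sup>2) = (\<Sum>i\<in>I. (cmod (p i))\<^sup>2) + 2 * t * coord_part b (p l) + t\<^sup>2"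
proof -
  have "(cmod (p l + (if b then \<i> else 1) * complex_of_real t))\<^sup>2 = (cmod (p l))\<^sup>2 + 2 * t * coord_part b (p l) + t\<^sup>2"
    by (cases b) (simp_all add: cmod_power2 coord_part_def, simp_all add: power2_eq_square algebra_simps)
  then show ?thesis
    using assms by (simp add: dir_line_def sum.remove)
qed

lemma dpart_fs_pot:
  assumes "finite I" "u \<in> I"
  shows "dpart u b (fs_pot I) p = 2 * coord_part b (p u) / (1 + (\<Sum>i\<in>I. (cmod (p i))\<^sup>2))"
proof -
  let ?S = "\<Sum>i\<in>I. (cmod (p i))\<^sup>2"
  have "0 < 1 + ?S" by (simp add: add_pos_nonneg sum_nonneg)
  then have "((\<lambda>t. ln (1 + ?S + 2 * t * coord_part b (p u) + t\<^sup>2)) has_real_derivative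
               2 * coord_part b (p u) / (1 + ?S)) (at 0)"
    by (auto intro!: derivative_eq_intros simp: field_simps)
  then show ?thesis
    unfolding dpart_def fs_pot_def sum_cmod_sq_dir_line[OF assms] by (simp add: add.assoc DERIV_imp_deriv)
qed

lemma dpart2_fs_pot:
  assumes "finite I" "l \<in> I" "u \<in> I"
  shows "iter_dpart [(l,b),(u,b)] (fs_pot I) p =
           (2 * (if l = u then 1 else 0) * (1 + (\<Sum>i\<in>I. (cmod (p i))\<^sup>2))
              - 4 * coord_part b (p u) * coord_part b (p l)) / (1 + (\<Sum>i\<in>I. (cmod (p i))\<^sup>2))\<^sup>2"
proof -
  let ?S = "\<Sum>i\<in>I. (cmod (p i))\<^sup>2"
  have pos: "0 < 1 + ?S" by (simp add: add_pos_nonneg sum_nonneg)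
  have "coord_part b (dir_line l b p t u) = coord_part b (p u) + (if l = u then t else 0)" for t
    by (cases b) (auto simp: coord_part_def dir_line_def)
  then have "(\<lambda>t. dpart u b (fs_pot I) (dir_line l b p t)) =
       (\<lambda>t. 2 * (coord_part b (p u) + (if l = u then t else 0)) / (1 + ?S + 2 * t * coord_part b (p l) + t\<^sup>2))"
    using dpart_fs_pot[OF assms(1,3)] sum_cmod_sq_dir_line[OF assms(1,2)] by (simp add: add.assoc)
  moreover have "((\<lambda>t. 2 * (coord_part b (p u) + (if l = u then t else 0))
                         / (1 + ?S + 2 * t * coord_part b (p l) + t\<^sup>2)) has_real_derivative
     (2 * (if l = u then 1 else 0) * (1 + ?S) - 4 * coord_part b (p u) * coord_part b (p l)) / (1 + ?S)\<^sup>2) (at 0)"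
    using pos by (cases "l = u") (auto intro!: derivative_eq_intros simp: field_simps power2_eq_square)
  ultimately show ?thesis by (simp add: dpart_def DERIV_imp_deriv)
qed

lemma sum_sum_diagonal:
  fixes X c :: "nat \<Rightarrow> real"
  assumes "finite I"
  shows "(\<Sum>l\<in>I. \<Sum>u\<in>I. (if l = u then X l else 0) * c l * c u) = (\<Sum>l\<in>I. X l * (c l)\<^sup>2)"
  using assms by (simp add: if_distrib[of "\<lambda>x. x * _"] power2_eq_square mult.assoc sum.delta cong: if_cong)

lemma cplx_hess_real_form:
  fixes c :: "nat \<Rightarrow> real"
  shows "4 * Re (\<Sum>l\<in>I. \<Sum>u\<in>I. cplx_hess g w l u * complex_of_real (c l) * cnj (complex_of_real (c u)))
       = (\<Sum>l\<in>I. \<Sum>u\<in>I. (iter_dpart [(l,False),(u,False)] g w + iter_dpart [(l,True),(u,True)] g w) * c l * c u)"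
proof -
  have entry: "4 * Re (cplx_hess g w l u * complex_of_real (c l) * cnj (complex_of_real (c u)))
      = (iter_dpart [(l,False),(u,False)] g w + iter_dpart [(l,True),(u,True)] g w) * c l * c u" for l u
    by (simp add: cplx_hess_def field_simps)
  show ?thesis unfolding Re_sum sum_distrib_left entry ..
qed

lemma toric_cplx_hess_real_form:
  fixes c :: "nat \<Rightarrow> real"
  assumes "finite I" "toric_on I f" "smooth_coords I f" "w \<in> coord_space I"
    and "\<And>i. i \<in> I \<Longrightarrow> w i = complex_of_real (r i)" "\<And>i. i \<in> I \<Longrightarrow> r i > 0"
  shows "4 * Re (\<Sum>l\<in>I. \<Sum>u\<in>I. cplx_hess f w l u * complex_of_real (c l) * cnj (complex_of_real (c u)))
       = (\<Sum>l\<in>I. \<Sum>u\<in>I. iter_dpart [(l,False),(u,False)] f w * c l * c u)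
         + (\<Sum>l\<in>I. dpart l False f w / r l * (c l)\<^sup>2)"
proof -
  have "(\<Sum>l\<in>I. \<Sum>u\<in>I. iter_dpart [(l,True),(u,True)] f w * c l * c u)
      = (\<Sum>l\<in>I. \<Sum>u\<in>I. (if l = u then dpart l False f w / r l else 0) * c l * c u)"
    using toric_dpart_Im_Im[OF assms(2,3) _ _ assms(4-6)] by simp
  then show ?thesis
    unfolding cplx_hess_real_form sum_sum_diagonal[OF assms(1), symmetric]
    by (simp add: sum.distrib distrib_right)
qed

lemma fs_pot_cplx_hess_real_form:
  fixes c r :: "nat \<Rightarrow> real"
  assumes "finite I" "\<And>i. i \<in> I \<Longrightarrow> w i = complex_of_real (r i)"
  shows "4 * Re (\<Sum>l\<in>I. \<Sum>u\<in>I. cplx_hess (fs_pot I) w l u * complex_of_real (c l) * cnj (complex_of_real (c u)))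
       = 4 * ((1 + (\<Sum>i\<in>I. (r i)\<^sup>2)) * (\<Sum>l\<in>I. (c l)\<^sup>2) - (\<Sum>l\<in>I. r l * c l)\<^sup>2)
           / (1 + (\<Sum>i\<in>I. (r i)\<^sup>2))\<^sup>2"
proof -
  define T where "T = 1 + (\<Sum>i\<in>I. (r i)\<^sup>2)"
  have T_pos: "T > 0" by (simp add: T_def add_pos_nonneg sum_nonneg)
  have "(\<Sum>i\<in>I. (cmod (w i))\<^sup>2) = (\<Sum>i\<in>I. (r i)\<^sup>2)"
    using assms(2) by (simp add: norm_of_real)
  then have hess: "iter_dpart [(l,False),(u,False)] (fs_pot I) w + iter_dpart [(l,True),(u,True)] (fs_pot I) w
        = (4 * (if l = u then 1 else 0) * T - 4 * r l * r u) / T\<^sup>2" if "l \<in> I" "u \<in> I" for l u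
    using dpart2_fs_pot[OF assms(1) that, of False w] dpart2_fs_pot[OF assms(1) that, of True w] that assms(2)
    by (simp add: coord_part_def T_def add_divide_distrib[symmetric] algebra_simps)
  have entry: "(iter_dpart [(l,False),(u,False)] (fs_pot I) w + iter_dpart [(l,True),(u,True)] (fs_pot I) w)
         * c l * c u = (if l = u then 4 * T / T\<^sup>2 else 0) * c l * c u - 4 / T\<^sup>2 * (r l * c l) * (r u * c u)"
    if "l \<in> I" "u \<in> I" for l u
    unfolding hess[OF that] using T_pos by (cases "l = u") (simp_all add: field_simps)
  have "4 * Re (\<Sum>l\<in>I. \<Sum>u\<in>I. cplx_hess (fs_pot I) w l u * complex_of_real (c l) * cnj (complex_of_real (c u)))
      = (\<Sum>l\<in>I. \<Sum>u\<in>I. ((if l = u then 4 * T / T\<^sup>2 else 0) * c l * c u - 4 / T\<^sup>2 * (r l * c l) * (r u * c u)))"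
    unfolding cplx_hess_real_form by (intro sum.cong refl) (rule entry)
  also have "\<dots> = (\<Sum>l\<in>I. \<Sum>u\<in>I. (if l = u then 4 * T / T\<^sup>2 else 0) * c l * c u)
      - (\<Sum>l\<in>I. \<Sum>u\<in>I. 4 / T\<^sup>2 * (r l * c l) * (r u * c u))"
    by (simp only: sum_subtractf)
  also have "\<dots> = (\<Sum>l\<in>I. 4 * T / T\<^sup>2 * (c l)\<^sup>2) - 4 / T\<^sup>2 * (\<Sum>l\<in>I. r l * c l)\<^sup>2"
    unfolding sum_sum_diagonal[OF assms(1)] by (simp add: power2_eq_square sum_product sum_distrib_left mult_ac)
  also have "\<dots> = 4 * (T * (\<Sum>l\<in>I. (c l)\<^sup>2) - (\<Sum>l\<in>I. r l * c l)\<^sup>2) / T\<^sup>2"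
    using T_pos by (simp add: sum_distrib_left[symmetric] sum_divide_distrib[symmetric] diff_divide_distrib power2_eq_square)
  finally show ?thesis unfolding T_def .
qed

section \<open>Convexity in logarithmic coordinates\<close>

definition real_point :: "nat set \<Rightarrow> (nat \<Rightarrow> real) \<Rightarrow> nat \<Rightarrow> complex" where
  "real_point I y = (\<lambda>i. if i \<in> I then complex_of_real (y i) else 0)"

definition fs_admissible :: "real \<Rightarrow> nat set \<Rightarrow> ((nat \<Rightarrow> complex) \<Rightarrow> real) \<Rightarrow> bool" where
  "fs_admissible a I f \<longleftrightarrow> (\<forall>w\<in>coord_space I.
     pos_def_herm I (\<lambda>l u. complex_of_real a * cplx_hess (fs_pot I) w l u + cplx_hess f w l u))"

lemma real_point_in_coord_space: "real_point I y \<in> coord_space I"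
  by (simp add: real_point_def coord_space_def)

lemma fs_pot_real_point: "fs_pot I (real_point I y) = ln (1 + (\<Sum>i\<in>I. (y i)\<^sup>2))"
  by (simp add: fs_pot_def real_point_def)

lemma pos_def_herm_form_nonneg:
  assumes "pos_def_herm I M"
  shows "0 \<le> Re (\<Sum>l\<in>I. \<Sum>u\<in>I. M l u * v l * cnj (v u))"
proof (cases "\<exists>i\<in>I. v i \<noteq> 0")
  case True
  with assms have "0 < Re (\<Sum>l\<in>I. \<Sum>u\<in>I. M l u * v l * cnj (v u))"
    unfolding pos_def_herm_def by blast
  then show ?thesis by (rule less_imp_le)
next
  case False
  then have "(\<Sum>l\<in>I. \<Sum>u\<in>I. M l u * v l * cnj (v u)) = 0" by (intro sum.neutral ballI) simp
  then show ?thesis by simp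
qed

text \<open>For \<open>c l = r l * v l\<close> the right-hand side is the Hessian of \<open>f + a * fs_pot I\<close> in the
  variables \<open>ln (Re w l)\<close> at the point \<open>r\<close>, evaluated at \<open>v\<close>: admissibility makes a toric
  function convex in logarithmic coordinates.\<close>

lemma toric_admissible_log_hessian_nonneg:
  fixes c r :: "nat \<Rightarrow> real"
  assumes "finite I" "toric_on I f" "smooth_coords I f" "fs_admissible a I f"
    and r: "\<And>i. i \<in> I \<Longrightarrow> r i > 0"
  shows "0 \<le> (\<Sum>l\<in>I. \<Sum>u\<in>I. iter_dpart [(l,False),(u,False)] f (real_point I r) * c l * c u)
              + (\<Sum>l\<in>I. dpart l False f (real_point I r) / r l * (c l)\<^sup>2)
              + a * (4 * ((1 + (\<Sum>i\<in>I. (r i)\<^sup>2)) * (\<Sum>l\<in>I. (c l)\<^sup>2) - (\<Sum>l\<in>I. r l * c l)\<^sup>2)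
                     / (1 + (\<Sum>i\<in>I. (r i)\<^sup>2))\<^sup>2)"
proof -
  let ?w = "real_point I r" and ?c = "\<lambda>l. complex_of_real (c l)"
  have w: "?w i = complex_of_real (r i)" if "i \<in> I" for i using that by (simp add: real_point_def)
  have "pos_def_herm I (\<lambda>l u. complex_of_real a * cplx_hess (fs_pot I) ?w l u + cplx_hess f ?w l u)"
    using assms(4) real_point_in_coord_space unfolding fs_admissible_def by blast
  then have "0 \<le> 4 * Re (\<Sum>l\<in>I. \<Sum>u\<in>I.
      (complex_of_real a * cplx_hess (fs_pot I) ?w l u + cplx_hess f ?w l u) * ?c l * cnj (?c u))"
    by (intro mult_nonneg_nonneg[OF zero_le_numeral] pos_def_herm_form_nonneg)
  also have "\<dots> = a * (4 * Re (\<Sum>l\<in>I. \<Sum>u\<in>I. cplx_hess (fs_pot I) ?w l u * ?c l * cnj (?c u)))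
      + 4 * Re (\<Sum>l\<in>I. \<Sum>u\<in>I. cplx_hess f ?w l u * ?c l * cnj (?c u))"
    by (simp add: distrib_right sum.distrib Re_sum sum_distrib_left algebra_simps)
  also have "\<dots> = (\<Sum>l\<in>I. \<Sum>u\<in>I. iter_dpart [(l,False),(u,False)] f ?w * c l * c u)
      + (\<Sum>l\<in>I. dpart l False f ?w / r l * (c l)\<^sup>2)
      + a * (4 * ((1 + (\<Sum>i\<in>I. (r i)\<^sup>2)) * (\<Sum>l\<in>I. (c l)\<^sup>2) - (\<Sum>l\<in>I. r l * c l)\<^sup>2)
             / (1 + (\<Sum>i\<in>I. (r i)\<^sup>2))\<^sup>2)"
    by (simp only: fs_pot_cplx_hess_real_form[OF assms(1) w]
      toric_cplx_hess_real_form[OF assms(1-3) real_point_in_coord_space w r])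
  finally show ?thesis .
qed

lemma convex_tangent_le:
  fixes G G' G'' :: "real \<Rightarrow> real"
  assumes "\<And>s. (G has_real_derivative G' s) (at s)" "\<And>s. (G' has_real_derivative G'' s) (at s)"
    and "\<And>s. 0 \<le> G'' s"
  shows "G b - G a \<le> G' b * (b - a)"
proof -
  have "convex_on UNIV G"
    using assms by (intro f''_ge0_imp_convex) auto
  then have "G' b * (a - b) \<le> G a - G b"
    using convex_on_imp_above_tangent[where A = UNIV and c = b and x = a] assms(1)[of b] by simp
  then show ?thesis by (simp add: right_diff_distrib)
qed

lemma has_real_derivative_log_line:
  assumes "finite I" "smooth_coords I f" "set (map fst ds) \<subseteq> I"
  shows "((\<lambda>s. iter_dpart ds f (real_point I (\<lambda>i. exp (L i + s * V i)))) has_real_derivative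
           (\<Sum>l\<in>I. dpart l False (iter_dpart ds f) (real_point I (\<lambda>i. exp (L i + s * V i)))
                     * (V l * exp (L l + s * V l)))) (at s)"
proof -
  have curve: "real_point I (\<lambda>i. exp (L i + s * V i)) = coord_curve I (\<lambda>_. 0) (\<lambda>i s. exp (L i + s * V i)) s"
    for s by (simp add: real_point_def coord_curve_def)
  show ?thesis
    unfolding curve
  proof (rule has_real_derivative_coord_curve[OF assms(1) order_refl])
    fix l p assume "l \<in> I" "p \<in> coord_space I"
    then show "((\<lambda>t. iter_dpart ds f (p(l := p l + complex_of_real t))) has_real_derivative
                 dpart l False (iter_dpart ds f) p) (at 0)"
      using smooth_coords_has_real_derivative[OF assms(2,3), of l p False] by (simp add: dir_line_def)
  next
    fix l assume "l \<in> I"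
    then show "continuous_on (coord_space I) (dpart l False (iter_dpart ds f))"
      using smooth_coords_continuous_on[OF assms(2), of "(l,False) # ds"] assms(3) by simp
  qed (auto intro!: derivative_eq_intros continuous_intros simp: coord_space_def)
qed

lemma fs_pot_log_line_derivatives:
  fixes I :: "nat set" and L V :: "nat \<Rightarrow> real"
  defines "\<rho> l s \<equiv> exp (L l + s * V l)" and "T s \<equiv> 1 + (\<Sum>l\<in>I. (exp (L l + s * V l))\<^sup>2)"
  shows "((\<lambda>s. fs_pot I (real_point I (\<lambda>l. \<rho> l s))) has_real_derivative
            (\<Sum>l\<in>I. 2 * V l * (\<rho> l s)\<^sup>2) / T s) (at s)"
    and "((\<lambda>s. (\<Sum>l\<in>I. 2 * V l * (\<rho> l s)\<^sup>2) / T s) has_real_derivative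
            4 * (T s * (\<Sum>l\<in>I. (V l * \<rho> l s)\<^sup>2) - (\<Sum>l\<in>I. \<rho> l s * (V l * \<rho> l s))\<^sup>2) / (T s)\<^sup>2) (at s)"
proof -
  have T_def': "T s = 1 + (\<Sum>l\<in>I. (\<rho> l s)\<^sup>2)" for s by (simp add: T_def \<rho>_def)
  have T_pos: "T s > 0" for s by (simp add: T_def add_pos_nonneg sum_nonneg)
  have \<rho>: "((\<lambda>s. c * (\<rho> l s)\<^sup>2) has_real_derivative 2 * V l * c * (\<rho> l s)\<^sup>2) (at s)" for c l s
    unfolding \<rho>_def by (auto intro!: derivative_eq_intros simp: power2_eq_square exp_add[symmetric])
  have T: "(T has_real_derivative (\<Sum>l\<in>I. 2 * V l * (\<rho> l s)\<^sup>2)) (at s)" for s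
    unfolding T_def' using DERIV_add[OF DERIV_const DERIV_sum[OF \<rho>[of 1]]] by simp
  have "((\<lambda>s. ln (T s)) has_real_derivative (\<Sum>l\<in>I. 2 * V l * (\<rho> l s)\<^sup>2) / T s) (at s)"
    using DERIV_chain2[OF DERIV_ln_divide[OF T_pos] T] by simp
  then show "((\<lambda>s. fs_pot I (real_point I (\<lambda>l. \<rho> l s))) has_real_derivative
            (\<Sum>l\<in>I. 2 * V l * (\<rho> l s)\<^sup>2) / T s) (at s)"
    by (simp add: fs_pot_real_point T_def')
  have "((\<lambda>s. 2 * V l * (\<rho> l s)\<^sup>2) has_real_derivative 4 * (V l * \<rho> l s)\<^sup>2) (at s)" for l
    using \<rho>[of "2 * V l" l s] by (simp add: power_mult_distrib power2_eq_square mult_ac)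
  then have "((\<lambda>s. \<Sum>l\<in>I. 2 * V l * (\<rho> l s)\<^sup>2) has_real_derivative (\<Sum>l\<in>I. 4 * (V l * \<rho> l s)\<^sup>2)) (at s)"
    by (rule DERIV_sum)
  from DERIV_divide[OF this T T_pos[THEN less_imp_neq, symmetric]]
  show "((\<lambda>s. (\<Sum>l\<in>I. 2 * V l * (\<rho> l s)\<^sup>2) / T s) has_real_derivative
            4 * (T s * (\<Sum>l\<in>I. (V l * \<rho> l s)\<^sup>2) - (\<Sum>l\<in>I. \<rho> l s * (V l * \<rho> l s))\<^sup>2) / (T s)\<^sup>2) (at s)"
    by (simp add: power2_eq_square sum_distrib_left sum_distrib_right mult_ac)
qed

lemma has_real_derivative_log_line_gradient:
  fixes I :: "nat set" and L V :: "nat \<Rightarrow> real"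
  assumes fin: "finite I" and smooth: "smooth_coords I f"
  defines "\<gamma> s \<equiv> real_point I (\<lambda>i. exp (L i + s * V i))" and "c s l \<equiv> V l * exp (L l + s * V l)"
  shows "((\<lambda>s. \<Sum>l\<in>I. dpart l False f (\<gamma> s) * c s l) has_real_derivative
           (\<Sum>l\<in>I. \<Sum>u\<in>I. iter_dpart [(l,False),(u,False)] f (\<gamma> s) * c s l * c s u)
           + (\<Sum>l\<in>I. dpart l False f (\<gamma> s) / exp (L l + s * V l) * (c s l)\<^sup>2)) (at s)"
proof -
  have c: "((\<lambda>s. c s u) has_real_derivative V u * c s u) (at s)" for u
    unfolding c_def by (auto intro!: derivative_eq_intros)
  have "((\<lambda>s. dpart u False f (\<gamma> s) * c s u) has_real_derivative
      (\<Sum>l\<in>I. iter_dpart [(l,False),(u,False)] f (\<gamma> s) * c s l) * c s u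
      + dpart u False f (\<gamma> s) / exp (L u + s * V u) * (c s u)\<^sup>2) (at s)" if "u \<in> I" for u
  proof -
    have "((\<lambda>s. dpart u False f (\<gamma> s)) has_real_derivative
        (\<Sum>l\<in>I. iter_dpart [(l,False),(u,False)] f (\<gamma> s) * c s l)) (at s)"
      using has_real_derivative_log_line[OF fin smooth, of "[(u,False)]" L V s] that
      unfolding \<gamma>_def c_def by simp
    from DERIV_mult[OF this c] show ?thesis
      by (rule DERIV_cong) (simp add: c_def power2_eq_square field_simps)
  qed
  then have "((\<lambda>s. \<Sum>u\<in>I. dpart u False f (\<gamma> s) * c s u) has_real_derivative
      (\<Sum>u\<in>I. (\<Sum>l\<in>I. iter_dpart [(l,False),(u,False)] f (\<gamma> s) * c s l) * c s u
               + dpart u False f (\<gamma> s) / exp (L u + s * V u) * (c s u)\<^sup>2)) (at s)"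
    by (rule DERIV_sum)
  then show ?thesis
    by (rule DERIV_cong) (simp add: sum.distrib sum_distrib_right, subst sum.swap, simp add: mult_ac)
qed

lemma toric_admissible_log_tangent:
  assumes fin: "finite I" and toric: "toric_on I f" and smooth: "smooth_coords I f"
    and adm: "fs_admissible a I f"
    and x: "\<And>i. i \<in> I \<Longrightarrow> x i > 0" and y: "\<And>i. i \<in> I \<Longrightarrow> y i > 0"
  shows "f (real_point I y) + a * fs_pot I (real_point I y) - (f (real_point I x) + a * fs_pot I (real_point I x))
       \<le> (\<Sum>l\<in>I. (dpart l False f (real_point I y) * y l + 2 * a * (y l)\<^sup>2 / (1 + (\<Sum>i\<in>I. (y i)\<^sup>2)))
                  * (ln (y l) - ln (x l)))"
proof -
  define L where "L l = ln (x l)" for l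
  define V where "V l = ln (y l) - ln (x l)" for l
  define \<rho> where "\<rho> l s = exp (L l + s * V l)" for l s
  define \<gamma> where "\<gamma> s = real_point I (\<lambda>l. \<rho> l s)" for s
  define T where "T s = 1 + (\<Sum>l\<in>I. (\<rho> l s)\<^sup>2)" for s
  define c where "c s l = V l * \<rho> l s" for s l
  define G where "G s = f (\<gamma> s) + a * fs_pot I (\<gamma> s)" for s
  define G' where "G' s = (\<Sum>l\<in>I. dpart l False f (\<gamma> s) * c s l)
                          + a * ((\<Sum>l\<in>I. 2 * V l * (\<rho> l s)\<^sup>2) / T s)" for s
  define G'' where "G'' s = (\<Sum>l\<in>I. \<Sum>u\<in>I. iter_dpart [(l,False),(u,False)] f (\<gamma> s) * c s l * c s u)
      + (\<Sum>l\<in>I. dpart l False f (\<gamma> s) / \<rho> l s * (c s l)\<^sup>2)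
      + a * (4 * (T s * (\<Sum>l\<in>I. (c s l)\<^sup>2) - (\<Sum>l\<in>I. \<rho> l s * c s l)\<^sup>2) / (T s)\<^sup>2)" for s
  note fs_deriv = fs_pot_log_line_derivatives[where I = I and L = L and V = V, folded \<rho>_def, folded T_def]
  have "(G has_real_derivative G' s) (at s)" for s
    using has_real_derivative_log_line[OF fin smooth, of "[]" L V s]
    unfolding G_def G'_def \<gamma>_def c_def \<rho>_def
    by (intro DERIV_add DERIV_cmult fs_deriv(1)[unfolded \<rho>_def]) simp
  moreover have "(G' has_real_derivative G'' s) (at s)" for s
    using DERIV_add[OF has_real_derivative_log_line_gradient[OF fin smooth] DERIV_cmult[OF fs_deriv(2)]]
    unfolding G'_def G''_def \<gamma>_def c_def \<rho>_def by simp
  moreover have "0 \<le> G'' s" for s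
    using toric_admissible_log_hessian_nonneg[OF fin toric smooth adm, of "\<lambda>l. \<rho> l s" "c s"]
    unfolding G''_def \<gamma>_def T_def by (simp add: \<rho>_def)
  ultimately have tangent: "G 1 - G 0 \<le> G' 1"
    using convex_tangent_le[of G G' G'' 1 0] by simp
  have \<rho>_y: "\<rho> l 1 = y l" if "l \<in> I" for l
    using y[OF that] by (simp add: \<rho>_def L_def V_def)
  then have \<gamma>_1: "\<gamma> 1 = real_point I y" and T_1: "T 1 = 1 + (\<Sum>i\<in>I. (y i)\<^sup>2)"
    by (auto simp: \<gamma>_def real_point_def T_def)
  have \<gamma>_0: "\<gamma> 0 = real_point I x"
    using x by (auto simp: \<gamma>_def real_point_def \<rho>_def L_def)
  have "G' 1 = (\<Sum>l\<in>I. (dpart l False f (real_point I y) * y l + 2 * a * (y l)\<^sup>2 / (1 + (\<Sum>i\<in>I. (y i)\<^sup>2)))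
                  * (ln (y l) - ln (x l)))"
    unfolding G'_def c_def sum_divide_distrib sum_distrib_left sum.distrib[symmetric] \<gamma>_1 T_1
    by (intro sum.cong refl) (simp add: \<rho>_y V_def algebra_simps)
  with tangent show ?thesis unfolding G_def \<gamma>_0 \<gamma>_1 by simp
qed

section \<open>Geometric means over blocks\<close>

definition block :: "nat set \<Rightarrow> (nat \<Rightarrow> 'b) \<Rightarrow> nat \<Rightarrow> nat set" where
  "block I blk l = {i \<in> I. blk i = blk l}"

definition block_geomean :: "nat set \<Rightarrow> (nat \<Rightarrow> 'b) \<Rightarrow> (nat \<Rightarrow> real) \<Rightarrow> nat \<Rightarrow> real" where
  "block_geomean I blk x l = (\<Prod>i\<in>block I blk l. x i) powr (1 / real (card (block I blk l)))"

lemma block_eq: "blk l = blk l' \<Longrightarrow> block I blk l = block I blk l'"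
  by (simp add: block_def)

lemma sum_block_average:
  fixes C g :: "nat \<Rightarrow> real"
  assumes fin: "finite I" and C: "\<And>l l'. l \<in> I \<Longrightarrow> l' \<in> I \<Longrightarrow> blk l = blk l' \<Longrightarrow> C l = C l'"
  shows "(\<Sum>l\<in>I. C l * ((\<Sum>i\<in>block I blk l. g i) / card (block I blk l))) = (\<Sum>i\<in>I. C i * g i)"
proof -
  have card_pos: "card (block I blk i) > 0" if "i \<in> I" for i
    using that fin by (auto simp: block_def card_gt_0_iff)
  have "(\<Sum>l\<in>I. C l * ((\<Sum>i\<in>block I blk l. g i) / card (block I blk l)))
      = (\<Sum>l\<in>I. \<Sum>i\<in>I. if blk i = blk l then C l * g i / card (block I blk l) else 0)"
    unfolding block_def using fin
    by (simp add: sum_distrib_left sum_divide_distrib sum.inter_filter) (intro sum.cong refl, simp)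
  also have "\<dots> = (\<Sum>i\<in>I. \<Sum>l\<in>I. if blk l = blk i then C i * g i / card (block I blk i) else 0)"
  proof -
    have "(if blk i = blk l then C l * g i / card (block I blk l) else 0)
        = (if blk l = blk i then C i * g i / card (block I blk i) else 0)" if "i \<in> I" "l \<in> I" for i l
      using C[OF that(2,1)] block_eq[of blk l i I] by auto
    then show ?thesis by (subst sum.swap) (intro sum.cong refl)
  qed
  also have "\<dots> = (\<Sum>i\<in>I. C i * g i)"
    using fin card_pos
    by (intro sum.cong refl) (simp add: sum.inter_filter[symmetric] flip: block_def)
  finally show ?thesis .
qed

lemma ln_block_geomean:
  assumes "finite I" "l \<in> I" "\<And>i. i \<in> I \<Longrightarrow> x i > 0"
  shows "ln (block_geomean I blk x l) = (\<Sum>i\<in>block I blk l. ln (x i)) / card (block I blk l)"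
proof -
  have "finite (block I blk l)" "\<And>i. i \<in> block I blk l \<Longrightarrow> x i > 0"
    using assms by (auto simp: block_def)
  then show ?thesis
    unfolding block_geomean_def by (simp add: ln_powr ln_prod prod_pos less_imp_neq[symmetric])
qed

lemma block_geomean_pos:
  assumes "finite I" "\<And>i. i \<in> I \<Longrightarrow> x i > 0"
  shows "block_geomean I blk x l > 0"
proof -
  have "(\<Prod>i\<in>block I blk l. x i) > 0"
    using assms by (intro prod_pos) (auto simp: block_def)
  then show ?thesis by (simp add: block_geomean_def)
qed

lemma sum_mult_ln_block_geomean:
  fixes C :: "nat \<Rightarrow> real"
  assumes "finite I" "\<And>i. i \<in> I \<Longrightarrow> x i > 0"
    and "\<And>l l'. l \<in> I \<Longrightarrow> l' \<in> I \<Longrightarrow> blk l = blk l' \<Longrightarrow> C l = C l'"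
  shows "(\<Sum>l\<in>I. C l * ln (block_geomean I blk x l)) = (\<Sum>l\<in>I. C l * ln (x l))"
proof -
  have "(\<Sum>l\<in>I. C l * ln (block_geomean I blk x l))
      = (\<Sum>l\<in>I. C l * ((\<Sum>i\<in>block I blk l. ln (x i)) / card (block I blk l)))"
    by (intro sum.cong refl) (simp add: ln_block_geomean[OF assms(1) _ assms(2)])
  also have "\<dots> = (\<Sum>l\<in>I. C l * ln (x l))"
    by (rule sum_block_average[OF assms(1,3)])
  finally show ?thesis .
qed

lemma dpart_swap_eq:
  assumes "\<And>w. f (w \<circ> Fun.swap l l' id) = f w" "w l = w l'"
  shows "dpart l b f w = dpart l' b f w"
proof -
  have "dir_line l' b w t \<circ> Fun.swap l l' id = dir_line l b w t" for t
    using assms(2) by (auto simp: fun_eq_iff dir_line_def Transposition.transpose_def)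
  then show ?thesis
    unfolding dpart_def by (metis assms(1))
qed

lemma block_geomean_le:
  assumes fin: "finite I" and toric: "toric_on I f" and smooth: "smooth_coords I f"
    and adm: "fs_admissible a I f"
    and sym: "\<And>w l l'. l \<in> I \<Longrightarrow> l' \<in> I \<Longrightarrow> blk l = blk l' \<Longrightarrow> f (w \<circ> Fun.swap l l' id) = f w"
    and x: "\<And>i. i \<in> I \<Longrightarrow> x i > 0"
  shows "f (real_point I (block_geomean I blk x)) + a * fs_pot I (real_point I (block_geomean I blk x))
       \<le> f (real_point I x) + a * fs_pot I (real_point I x)"
proof -
  let ?y = "block_geomean I blk x"
  define C where "C l = dpart l False f (real_point I ?y) * ?y l + 2 * a * (?y l)\<^sup>2 / (1 + (\<Sum>i\<in>I. (?y i)\<^sup>2))" for l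
  have y_eq: "?y l = ?y l'" if "blk l = blk l'" for l l'
    unfolding block_geomean_def block_eq[OF that] ..
  have C: "C l = C l'" if "l \<in> I" "l' \<in> I" "blk l = blk l'" for l l'
    using dpart_swap_eq[where f = f and l = l and l' = l', OF sym[OF that], of "real_point I ?y" False]
      y_eq[OF that(3)] that
    by (simp add: C_def real_point_def)
  have "(\<Sum>l\<in>I. C l * ln (?y l)) = (\<Sum>l\<in>I. C l * ln (x l))"
    by (rule sum_mult_ln_block_geomean[OF fin x C])
  then have "(\<Sum>l\<in>I. C l * (ln (?y l) - ln (x l))) = 0"
    by (simp add: right_diff_distrib sum_subtractf)
  moreover have "f (real_point I ?y) + a * fs_pot I (real_point I ?y) - (f (real_point I x) + a * fs_pot I (real_point I x))
      \<le> (\<Sum>l\<in>I. C l * (ln (?y l) - ln (x l)))"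
    unfolding C_def
    by (rule toric_admissible_log_tangent[OF fin toric smooth adm]) (simp_all add: x block_geomean_pos[OF fin x])
  ultimately show ?thesis by simp
qed

section \<open>The chart \<open>z\<^sub>0 = 1\<close>\<close>

lemma chart_idx_0: "chart_idx m 0 = {1..m}"
  by (auto simp: chart_idx_def)

lemma smooth_Pm_chart_0: "smooth_Pm m \<phi> \<Longrightarrow> smooth_coords {1..m} (\<lambda>w. \<phi> (chart m 0 w))"
  unfolding smooth_Pm_def chart_idx_0[symmetric] by blast

lemma g_admissible_chart_0: "g_admissible a m \<phi> \<Longrightarrow> fs_admissible a {1..m} (\<lambda>w. \<phi> (chart m 0 w))"
  unfolding g_admissible_def fs_admissible_def chart_idx_0[symmetric] by blast

lemma G_invariant_toric_chart_0:
  assumes "G_invariant n k \<phi>" "m < k * n"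
  shows "toric_on {1..m} (\<lambda>w. \<phi> (chart m 0 w))"
  unfolding toric_on_def
proof (intro ballI allI impI)
  fix u z \<zeta> \<zeta>' assume u: "u \<in> {1..m}" and "cmod \<zeta> = cmod \<zeta>'"
  then obtain \<theta> where \<theta>: "\<zeta> = cis \<theta> * \<zeta>'" by (metis cmod_eq_imp_cis_mult)
  let ?z = "(chart m 0 z)(u := \<zeta>')"
  have "\<forall>p<k * n. \<forall>\<theta> z. \<phi> (z(p := cis \<theta> * z p)) = \<phi> z"
    using assms(1) unfolding G_invariant_def by blast
  with u assms(2) have "\<phi> (?z(u := cis \<theta> * \<zeta>')) = \<phi> ?z"
    by (metis atLeastAtMost_iff fun_upd_same le_less_trans)
  moreover have "chart m 0 (z(u := c)) = (chart m 0 z)(u := c)" for c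
    using u by (auto simp: chart_def fun_eq_iff)
  ultimately show "\<phi> (chart m 0 (z(u := \<zeta>))) = \<phi> (chart m 0 (z(u := \<zeta>')))"
    using \<theta> by simp
qed

lemma G_invariant_swap_chart_0:
  assumes "G_invariant n k \<phi>" "m < k * n" "l \<in> {1..m}" "l' \<in> {1..m}" "l div n = l' div n"
  shows "\<phi> (chart m 0 (w \<circ> Fun.swap l l' id)) = \<phi> (chart m 0 w)"
proof -
  have "chart m 0 (w \<circ> Fun.swap l l' id) = chart m 0 w \<circ> Fun.swap l l' id"
    using assms(3,4) by (auto simp: fun_eq_iff chart_def Transposition.transpose_def)
  moreover have "\<phi> (chart m 0 w \<circ> Fun.swap l l' id) = \<phi> (chart m 0 w)"
    using assms unfolding G_invariant_def by auto
  ultimately show ?thesis by simp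
qed

lemma proj_fun_chart_0:
  assumes "proj_fun m \<phi>" "z 0 = 1" "\<And>i. i \<in> {1..m} \<Longrightarrow> z i = complex_of_real (y i)"
  shows "\<phi> z = \<phi> (chart m 0 (real_point {1..m} y))"
proof -
  have "\<forall>i\<le>m. z i = chart m 0 (real_point {1..m} y) i"
    using assms(2,3) by (auto simp: chart_def real_point_def)
  then show ?thesis using assms(1) unfolding proj_fun_def by blast
qed

lemma psi_real_point:
  assumes "z 0 = 1" "\<And>i. i \<in> {1..m} \<Longrightarrow> z i = complex_of_real (y i)" "\<And>i. i \<in> {1..m} \<Longrightarrow> y i > 0"
  shows "psi a m z = 2 * a / real (m + 1) * (\<Sum>i\<in>{1..m}. ln (y i)) - a * fs_pot {1..m} (real_point {1..m} y)"
proof -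
  have atMost: "{..m} = insert 0 {1..m}" by auto
  have "(\<Prod>p\<le>m. cmod (z p)) = (\<Prod>i\<in>{1..m}. y i)" "(\<Sum>p\<le>m. (cmod (z p))\<^sup>2) = 1 + (\<Sum>i\<in>{1..m}. (y i)\<^sup>2)"
    using assms unfolding atMost by (auto intro!: prod.cong sum.cong simp: abs_of_pos)
  moreover have "(\<Prod>i\<in>{1..m}. y i) > 0" "1 + (\<Sum>i\<in>{1..m}. (y i)\<^sup>2) > 0"
    using assms(3) by (auto intro!: prod_pos add_pos_nonneg sum_nonneg)
  moreover have "\<forall>i\<in>{1..m}. y i \<noteq> 0"
    using assms(3) by (auto simp: less_imp_neq[symmetric])
  moreover from this have "ln (\<Prod>i\<in>{1..m}. y i) = (\<Sum>i\<in>{1..m}. ln (y i))"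
    by (intro ln_prod) auto
  ultimately show ?thesis
    by (simp add: psi_def fs_pot_real_point ln_div ln_powr)
qed

lemma phi_minus_psi_real_point:
  assumes "proj_fun m \<phi>" "z 0 = 1" "\<And>i. i \<in> {1..m} \<Longrightarrow> z i = complex_of_real (r i)"
    and "\<And>i. i \<in> {1..m} \<Longrightarrow> r i > 0"
  shows "\<phi> z - psi a m z = \<phi> (chart m 0 (real_point {1..m} r)) + a * fs_pot {1..m} (real_point {1..m} r)
           - 2 * a / real (m + 1) * (\<Sum>i\<in>{1..m}. ln (r i))"
  using proj_fun_chart_0[OF assms(1), where z = z and y = r] psi_real_point[where z = z and y = r] assms
  by simp

lemma div_eq_iff_bounds:
  fixes j h n :: nat
  assumes "n > 0"
  shows "j div n = h \<longleftrightarrow> h * n \<le> j \<and> j < h * n + n"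
proof
  assume "j div n = h"
  then show "h * n \<le> j \<and> j < h * n + n"
    using div_times_less_eq_dividend[of j n] dividend_less_div_times[OF assms, of j] by auto
qed (intro div_nat_eqI; simp add: mult.commute)

lemma block_div_eq:
  fixes n k m i :: nat
  assumes "n > 0" "m = k * n - 1" "i \<in> {1..m}"
  shows "block {1..m} (\<lambda>j. j div n) i = {i div n * n..(i div n + 1) * n - 1} - {0}"
proof -
  have "i < k * n" using assms(2,3) by auto
  then have "i div n < k" by (simp add: less_mult_imp_div_less)
  then have "(i div n + 1) * n \<le> k * n" by (intro mult_le_mono1) simp
  then show ?thesis
    using assms unfolding block_def
    by (auto simp: div_eq_iff_bounds)
qed

lemma block_geomean_div:
  fixes n k m i :: nat
  assumes "n > 0" "m = k * n - 1" "i \<in> {1..m}"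
  shows "block_geomean {1..m} (\<lambda>j. j div n) x i =
           (if i < n then (\<Prod>j\<in>{1..n-1}. x j) powr (1 / real (n - 1))
            else (\<Prod>j\<in>{i div n * n..(i div n + 1) * n - 1}. x j) powr (1 / real n))"
proof (cases "i < n")
  case True
  then have "block {1..m} (\<lambda>j. j div n) i = {0..n-1} - {0}"
    using block_div_eq[OF assms] by simp
  also have "\<dots> = {1..n-1}" by auto
  finally show ?thesis using True by (simp add: block_geomean_def)
next
  case False
  then have "0 < i div n * n" using assms(1) by (simp add: div_greater_zero_iff)
  then have "block {1..m} (\<lambda>j. j div n) i = {i div n * n..(i div n + 1) * n - 1}"
    using block_div_eq[OF assms] by auto
  moreover have "card {i div n * n..(i div n + 1) * n - 1} = n"
    using assms(1) by simp
  ultimately show ?thesis using False by (simp add: block_geomean_def)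
qed

theorem lemma1:
  fixes k n m :: nat and a :: real and \<phi> :: "(nat \<Rightarrow> complex) \<Rightarrow> real" and x :: "nat \<Rightarrow> real"
  assumes "k \<ge> 1" and "n \<ge> 2" and "m = k * n - 1" and "a > 0"
    and "proj_fun m \<phi>" and "smooth_Pm m \<phi>" and "g_admissible a m \<phi>" and "G_invariant n k \<phi>"
    and "\<forall>i\<in>{1..m}. 0 < x i \<and> x i \<le> 1"
  shows "(let \<zeta>0 = (\<Prod>i\<in>{1..n-1}. x i) powr (1 / real (n - 1));
              \<zeta> = (\<lambda>h. (\<Prod>i\<in>{h*n..(h+1)*n-1}. x i) powr (1 / real n));
              P = (\<lambda>i. if i = 0 then 1 else complex_of_real (x i));
              Q = (\<lambda>i. if i = 0 then 1 else if i < n then complex_of_real \<zeta>0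
                       else complex_of_real (\<zeta> (i div n)))
          in \<phi> P - psi a m P \<ge> \<phi> Q - psi a m Q)"
proof -
  let ?I = "{1..m}" and ?f = "\<lambda>w. \<phi> (chart m 0 w)"
  let ?y = "block_geomean ?I (\<lambda>j. j div n) x"
  have n: "n > 0" using assms(2) by simp
  have m: "m < k * n" using assms(1,3) n by simp
  have x: "\<And>i. i \<in> ?I \<Longrightarrow> x i > 0" using assms(9) by blast
  have y: "?y i > 0" for i by (rule block_geomean_pos) (simp_all add: x)
  define P :: "nat \<Rightarrow> complex" where "P i = (if i = 0 then 1 else complex_of_real (x i))" for i
  define Q :: "nat \<Rightarrow> complex" where "Q i = (if i = 0 then 1 else if i < n
      then complex_of_real ((\<Prod>j\<in>{1..n-1}. x j) powr (1 / real (n - 1)))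
      else complex_of_real ((\<Prod>j\<in>{i div n * n..(i div n + 1) * n - 1}. x j) powr (1 / real n)))" for i
  have Q: "\<phi> Q - psi a m Q = ?f (real_point ?I ?y) + a * fs_pot ?I (real_point ?I ?y)
      - 2 * a / real (m + 1) * (\<Sum>i\<in>?I. ln (?y i))"
    using block_geomean_div[OF n assms(3)]
    by (intro phi_minus_psi_real_point[OF assms(5)] y) (auto simp: Q_def)
  have P: "\<phi> P - psi a m P = ?f (real_point ?I x) + a * fs_pot ?I (real_point ?I x)
      - 2 * a / real (m + 1) * (\<Sum>i\<in>?I. ln (x i))"
    by (intro phi_minus_psi_real_point[OF assms(5)] x) (auto simp: P_def)
  have le: "?f (real_point ?I ?y) + a * fs_pot ?I (real_point ?I ?y)
      \<le> ?f (real_point ?I x) + a * fs_pot ?I (real_point ?I x)"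
    by (rule block_geomean_le[OF finite_atLeastAtMost G_invariant_toric_chart_0[OF assms(8) m]
          smooth_Pm_chart_0[OF assms(6)] g_admissible_chart_0[OF assms(7)]
          G_invariant_swap_chart_0[OF assms(8) m] x])
  have ln_sum: "(\<Sum>i\<in>?I. ln (?y i)) = (\<Sum>i\<in>?I. ln (x i))"
    using sum_mult_ln_block_geomean[where C = "\<lambda>_. 1" and I = ?I and x = x and blk = "\<lambda>j. j div n"] x by simp
  have "\<phi> Q - psi a m Q \<le> \<phi> P - psi a m P"
    unfolding P Q ln_sum by (rule diff_right_mono[OF le])
  then show ?thesis unfolding Let_def P_def[symmetric] Q_def[symmetric] .
qed

end
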